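(* Let $G$ be a finite connected unweighted graph with $E\ge1$ edges, enumerated as $e_1,\dots,e_E$, and let $M\in\mathbb{N}$. Define the graph $H=H(G,M)$ as follows. For each vertex $u$ of $G$ take a path ("short path") $p_u$ with vertices $(u,1),(u,2),\dots,(u,E)$, consecutive ones adjacent; these paths are disjoint. For each edge $e_i=uv$ of $G$ add a path of length $M$ (with $M-1$ new internal vertices) joining $(u,i)$ and $(v,i)$; these "long paths" are internally disjoint from each other and from the short paths. Then $H$ has maximum degree at most $3$. Fix $i_0\in\{1,\dots,E\}$ and define $\psi:V(G)\to V(H)$ by $\psi(u)=(u,i_0)$. Then, with shortest path metrics $d_G,d_H$, for all vertices $u,v$ of $G$: $$M\,d_G(u,v)\le d_H(\psi(u),\psi(v))\le (2E+M)\,d_G(u,v).$$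
   Context: Graphs carry the shortest path metric; the length of a path is its number of edges. *)

theory Defs
  imports Main
begin

inductive walk :: "('v \<Rightarrow> 'v \<Rightarrow> bool) \<Rightarrow> 'v \<Rightarrow> 'v \<Rightarrow> nat \<Rightarrow> bool"
  for adj :: "'v \<Rightarrow> 'v \<Rightarrow> bool" where
  walk_nil: "walk adj x x 0"
| walk_cons: "adj x y \<Longrightarrow> walk adj y z n \<Longrightarrow> walk adj x z (Suc n)"

definition gdist :: "('v \<Rightarrow> 'v \<Rightarrow> bool) \<Rightarrow> 'v \<Rightarrow> 'v \<Rightarrow> nat" where
  "gdist adj x y = (LEAST n. walk adj x y n)"

text \<open>The graph G: finite vertex set V, edges enumerated (0-based) by the list es;
  the adjacency of G is the symmetric closure of set es.\<close>

definition gadj :: "('a \<times> 'a) list \<Rightarrow> 'a \<Rightarrow> 'a \<Rightarrow> bool" where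
  "gadj es u v = ((u, v) \<in> set es \<or> (v, u) \<in> set es)"

definition simple_graph_enum :: "'a set \<Rightarrow> ('a \<times> 'a) list \<Rightarrow> bool" where
  "simple_graph_enum V es =
     (finite V \<and> (\<forall>(u, v) \<in> set es. u \<in> V \<and> v \<in> V \<and> u \<noteq> v)
      \<and> distinct (map (\<lambda>(u, v). {u, v}) es))"

definition connected_graph :: "'a set \<Rightarrow> ('a \<times> 'a) list \<Rightarrow> bool" where
  "connected_graph V es = (\<forall>u\<in>V. \<forall>v\<in>V. \<exists>n. walk (gadj es) u v n)"

text \<open>Vertices of H: Short u j is the vertex (u, j+1) of the short path p_u (0-based j);
  Long i k (0 < k < M) is the k-th internal vertex of the long path of edge es!i.\<close>

datatype 'a hvert = Short 'a nat | Long nat nat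

definition long_node :: "('a \<times> 'a) list \<Rightarrow> nat \<Rightarrow> nat \<Rightarrow> nat \<Rightarrow> 'a hvert" where
  "long_node es M i k =
     (if k = 0 then Short (fst (es ! i)) i
      else if k = M then Short (snd (es ! i)) i
      else Long i k)"

definition H_verts :: "'a set \<Rightarrow> ('a \<times> 'a) list \<Rightarrow> nat \<Rightarrow> 'a hvert set" where
  "H_verts V es M =
     {Short u j | u j. u \<in> V \<and> j < length es} \<union>
     {Long i k | i k. i < length es \<and> 0 < k \<and> k < M}"

definition H_adj0 :: "'a set \<Rightarrow> ('a \<times> 'a) list \<Rightarrow> nat \<Rightarrow> 'a hvert \<Rightarrow> 'a hvert \<Rightarrow> bool" where
  "H_adj0 V es M x y =
     ((\<exists>u\<in>V. \<exists>j. Suc j < length es \<and> x = Short u j \<and> y = Short u (Suc j))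
      \<or> (\<exists>i < length es. \<exists>k < M. x = long_node es M i k \<and> y = long_node es M i (Suc k)))"

definition H_adj :: "'a set \<Rightarrow> ('a \<times> 'a) list \<Rightarrow> nat \<Rightarrow> 'a hvert \<Rightarrow> 'a hvert \<Rightarrow> bool" where
  "H_adj V es M x y = (H_adj0 V es M x y \<or> H_adj0 V es M y x)"

end

theory Submission
  imports Defs
begin

(* Write d_G, d_H for the shortest path metrics and psi u = Short u i0.
   Degree: a short-path vertex (u,j) has at most its two short-path neighbours and the
   one end of the long path of edge e_j lying at it (the endpoints of e_j are distinct);
   an internal long-path vertex has exactly its two long-path neighbours.
   Upper bound: every edge e_i = uv of G is simulated in H by the walk
   (u,i0) -> (u,i) along p_u, the long path of e_i, and (v,i) -> (v,i0) along p_v, of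
   length at most 2E + M; concatenating along a geodesic of G gives the bound.
   Lower bound: the potential phi(x), defined as M * d_G(u,w) on the short path p_w and
   interpolated linearly (as a minimum over both ends) along each long path, changes by
   at most 1 across every edge of H, so d_H(psi u, psi v) >= phi(psi v) - phi(psi u)
   = M * d_G(u,v). *)

section \<open>Walks and the shortest path metric\<close>

lemma walk_append: "walk adj x y n \<Longrightarrow> walk adj y z m \<Longrightarrow> walk adj x z (n + m)"
  by (induction rule: walk.induct) (auto intro: walk.intros)

lemma walk_snoc: "walk adj x y n \<Longrightarrow> adj y z \<Longrightarrow> walk adj x z (Suc n)"
  using walk_append[of adj x y n z 1] by (auto intro: walk.intros)

lemma walk_rev:
  assumes "\<And>a b. adj a b \<Longrightarrow> adj b a"
  shows "walk adj x y n \<Longrightarrow> walk adj y x n"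
  by (induction rule: walk.induct) (auto intro: walk.intros walk_snoc assms)

lemma gdist_le: "walk adj x y n \<Longrightarrow> gdist adj x y \<le> n"
  unfolding gdist_def by (rule Least_le)

lemma gdist_walk: "walk adj x y n \<Longrightarrow> walk adj x y (gdist adj x y)"
  unfolding gdist_def by (rule LeastI)

lemma gdist_refl: "gdist adj x x = 0"
  using gdist_le[OF walk_nil, of adj x] by simp

lemma gdist_edge_le:
  assumes "walk adj u a n" and "adj a b"
  shows "gdist adj u b \<le> gdist adj u a + 1"
  using gdist_le[OF walk_snoc[OF gdist_walk[OF assms(1)] assms(2)]] by simp

lemma walk_transfer:
  assumes "\<And>a b. adj a b \<Longrightarrow> \<exists>L \<le> c. walk adj' (f a) (f b) L"
  shows "walk adj x y n \<Longrightarrow> \<exists>L \<le> c * n. walk adj' (f x) (f y) L"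
proof (induction rule: walk.induct)
  case (walk_nil x)
  show ?case by (auto intro: walk.intros)
next
  case (walk_cons x y z n)
  obtain L1 where "L1 \<le> c" "walk adj' (f x) (f y) L1"
    using assms[OF walk_cons(1)] by blast
  moreover obtain L2 where "L2 \<le> c * n" "walk adj' (f y) (f z) L2"
    using walk_cons(3) by blast
  ultimately show ?case
    by (intro exI[of _ "L1 + L2"]) (auto intro: walk_append)
qed

lemma gdist_transfer:
  assumes "\<And>a b. adj a b \<Longrightarrow> \<exists>L \<le> c. walk adj' (f a) (f b) L"
    and "walk adj x y n"
  shows "gdist adj' (f x) (f y) \<le> c * gdist adj x y"
proof -
  obtain L where "L \<le> c * gdist adj x y" "walk adj' (f x) (f y) L"
    using walk_transfer[of adj c adj' f, OF assms(1) gdist_walk[OF assms(2)]] by blast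
  then show ?thesis using gdist_le[of adj' "f x" "f y" L] by linarith
qed

lemma walk_potential:
  assumes "\<And>a b. adj a b \<Longrightarrow> p b \<le> p a + 1"
  shows "walk adj x y n \<Longrightarrow> p y \<le> p x + n"
proof (induction rule: walk.induct)
  case (walk_nil x)
  show ?case by simp
next
  case (walk_cons x y z n)
  then show ?case using assms[OF walk_cons(1)] by simp
qed

lemma gdist_potential:
  assumes "\<And>a b. adj a b \<Longrightarrow> p b \<le> p a + 1"
    and "walk adj x y n"
  shows "p y \<le> p x + gdist adj x y"
  using walk_potential[OF assms(1) gdist_walk[OF assms(2)]] .

lemma gadj_in_V: "simple_graph_enum V es \<Longrightarrow> gadj es x y \<Longrightarrow> x \<in> V \<and> y \<in> V"
  unfolding simple_graph_enum_def gadj_def by auto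

lemma gdist_edge_ends:
  assumes "simple_graph_enum V es" "connected_graph V es" "u \<in> V" "i < length es"
  shows "gdist (gadj es) u (snd (es ! i)) \<le> gdist (gadj es) u (fst (es ! i)) + 1"
    and "gdist (gadj es) u (fst (es ! i)) \<le> gdist (gadj es) u (snd (es ! i)) + 1"
proof -
  have edge: "gadj es (fst (es ! i)) (snd (es ! i))" "gadj es (snd (es ! i)) (fst (es ! i))"
    using nth_mem[OF assms(4)] unfolding gadj_def by auto
  have reach: "\<exists>n. walk (gadj es) u a n" if "a \<in> V" for a
    using assms(2,3) that unfolding connected_graph_def by blast
  obtain n n' where
    walks: "walk (gadj es) u (fst (es ! i)) n" "walk (gadj es) u (snd (es ! i)) n'"
    using reach gadj_in_V[OF assms(1) edge(1)] by blast
  show "gdist (gadj es) u (snd (es ! i)) \<le> gdist (gadj es) u (fst (es ! i)) + 1"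
    using gdist_edge_le[OF walks(1) edge(1)] .
  show "gdist (gadj es) u (fst (es ! i)) \<le> gdist (gadj es) u (snd (es ! i)) + 1"
    using gdist_edge_le[OF walks(2) edge(2)] .
qed

section \<open>Local structure of H\<close>

lemma H_adj_sym: "H_adj V es M a b \<Longrightarrow> H_adj V es M b a"
  unfolding H_adj_def by auto

lemma short_path_walk_up:
  "u \<in> V \<Longrightarrow> j + d < length es \<Longrightarrow> walk (H_adj V es M) (Short u j) (Short u (j + d)) d"
proof (induction d arbitrary: j)
  case 0
  show ?case by (simp add: walk_nil)
next
  case (Suc d)
  have "H_adj V es M (Short u j) (Short u (Suc j))"
    using Suc.prems unfolding H_adj_def H_adj0_def by auto
  moreover have "walk (H_adj V es M) (Short u (Suc j)) (Short u (Suc j + d)) d"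
    using Suc.IH[of "Suc j"] Suc.prems by simp
  ultimately show ?case by (simp add: walk_cons)
qed

lemma short_path_walk:
  assumes "u \<in> V" "j < length es" "j' < length es"
  shows "\<exists>n < length es. walk (H_adj V es M) (Short u j) (Short u j') n"
proof (cases "j \<le> j'")
  case True
  then have "walk (H_adj V es M) (Short u j) (Short u j') (j' - j)"
    using short_path_walk_up[of u V j "j' - j" es M] assms by auto
  then show ?thesis using assms by (intro exI[of _ "j' - j"]) auto
next
  case False
  then have "walk (H_adj V es M) (Short u j') (Short u j) (j - j')"
    using short_path_walk_up[of u V j' "j - j'" es M] assms by auto
  then have "walk (H_adj V es M) (Short u j) (Short u j') (j - j')"
    using walk_rev[of "H_adj V es M"] H_adj_sym by blast
  then show ?thesis using assms by (intro exI[of _ "j - j'"]) auto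
qed

lemma long_path_step:
  "i < length es \<Longrightarrow> k < M \<Longrightarrow> H_adj V es M (long_node es M i k) (long_node es M i (Suc k))"
  unfolding H_adj_def H_adj0_def by blast

lemma long_path_walk:
  assumes "i < length es" "M \<ge> 1"
  shows "walk (H_adj V es M) (Short (fst (es ! i)) i) (Short (snd (es ! i)) i) M"
proof -
  have along: "walk (H_adj V es M) (long_node es M i 0) (long_node es M i k) k" if "k \<le> M" for k
    using that
  proof (induction k)
    case 0
    show ?case by (simp add: walk_nil)
  next
    case (Suc k)
    then have "walk (H_adj V es M) (long_node es M i 0) (long_node es M i k) k" "k < M"
      by simp_all
    then show ?case using walk_snoc long_path_step[OF assms(1)] by metis
  qed
  show ?thesis using along[of M] assms(2) by (simp add: long_node_def)
qed

lemma edge_simulation: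
  assumes "simple_graph_enum V es" "M \<ge> 1" "i0 < length es" "gadj es x y"
  shows "\<exists>L \<le> 2 * length es + M. walk (H_adj V es M) (Short x i0) (Short y i0) L"
proof -
  obtain i where i: "i < length es" "es ! i = (x, y) \<or> es ! i = (y, x)"
    using assms(4) unfolding gadj_def in_set_conv_nth by metis
  have xy: "x \<in> V" "y \<in> V" using gadj_in_V[OF assms(1,4)] by auto
  have "walk (H_adj V es M) (Short x i) (Short y i) M"
    using i(2) long_path_walk[OF i(1) assms(2), of V]
      walk_rev[of "H_adj V es M", OF H_adj_sym] by auto
  moreover obtain n1 where "n1 < length es" "walk (H_adj V es M) (Short x i0) (Short x i) n1"
    using short_path_walk[OF xy(1) assms(3) i(1)] by blast
  moreover obtain n2 where "n2 < length es" "walk (H_adj V es M) (Short y i) (Short y i0) n2"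
    using short_path_walk[OF xy(2) i(1) assms(3)] by blast
  ultimately show ?thesis
    by (intro exI[of _ "n1 + M + n2"]) (auto intro: walk_append)
qed

section \<open>Maximum degree\<close>

text \<open>Neighbours of (u,j): the two short-path neighbours and one end of the long path of
  e_j; only one end can lie at u because the edge e_j is not a loop.\<close>
lemma short_neighbours:
  assumes "simple_graph_enum V es" "j < length es"
  shows "{y. H_adj V es M (Short u j) y} \<subseteq>
     {Short u (Suc j), Short u (j - 1),
      if u = fst (es ! j) then long_node es M j 1 else long_node es M j (M - 1)}"
proof -
  have "fst (es ! j) \<noteq> snd (es ! j)"
    using assms nth_mem[OF assms(2)] unfolding simple_graph_enum_def by fastforce
  then show ?thesis
    unfolding H_adj_def H_adj0_def by (auto simp add: long_node_def split: if_splits)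
qed

lemma long_neighbours:
  "{y. H_adj V es M (Long i k) y} \<subseteq> {long_node es M i (Suc k), long_node es M i (k - 1)}"
  unfolding H_adj_def H_adj0_def by (auto simp add: long_node_def split: if_splits)

lemma card_subset_three:
  assumes "A \<subseteq> {a, b, c}"
  shows "finite A \<and> card A \<le> 3"
proof -
  have "card {a, b, c} \<le> 3" by (auto simp: card_insert_if)
  then show ?thesis using assms card_mono[of "{a, b, c}" A] finite_subset by fastforce
qed

lemma H_max_degree:
  assumes "simple_graph_enum V es" "x \<in> H_verts V es M"
  shows "finite {y. H_adj V es M x y} \<and> card {y. H_adj V es M x y} \<le> 3"
proof (cases x)
  case (Short u j)
  then have "j < length es" using assms(2) unfolding H_verts_def by auto
  then show ?thesis using short_neighbours[OF assms(1)] Short card_subset_three by metis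
next
  case (Long i k)
  then show ?thesis using long_neighbours[of V es M i k] card_subset_three
    by (metis subset_insertI2)
qed

section \<open>The potential for the lower bound\<close>

definition potential :: "('a \<times> 'a) list \<Rightarrow> nat \<Rightarrow> 'a \<Rightarrow> 'a hvert \<Rightarrow> nat" where
  "potential es M u x = (case x of
       Short w j \<Rightarrow> M * gdist (gadj es) u w
     | Long i k \<Rightarrow> min (M * gdist (gadj es) u (fst (es ! i)) + k)
                      (M * gdist (gadj es) u (snd (es ! i)) + (M - k)))"

text \<open>The interpolation formula also holds at the two ends of each long path, because the
  G-distances to the ends of an edge differ by at most one.\<close>
lemma potential_long_node:
  assumes "simple_graph_enum V es" "connected_graph V es" "u \<in> V"
    "i < length es" "k \<le> M"
  shows "potential es M u (long_node es M i k) =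
    min (M * gdist (gadj es) u (fst (es ! i)) + k) (M * gdist (gadj es) u (snd (es ! i)) + (M - k))"
proof -
  note close = gdist_edge_ends[OF assms(1-4)]
  have "M * gdist (gadj es) u (snd (es ! i)) \<le> M * gdist (gadj es) u (fst (es ! i)) + M"
    "M * gdist (gadj es) u (fst (es ! i)) \<le> M * gdist (gadj es) u (snd (es ! i)) + M"
    using mult_le_mono2[OF close(1), of M] mult_le_mono2[OF close(2), of M] by auto
  then show ?thesis
    using assms(5) by (auto simp add: long_node_def potential_def min_def)
qed

lemma potential_lipschitz:
  assumes "simple_graph_enum V es" "connected_graph V es" "u \<in> V"
    and "H_adj V es M x y"
  shows "potential es M u y \<le> potential es M u x + 1"
proof -
  have "potential es M u b \<le> potential es M u a + 1 \<and> potential es M u a \<le> potential es M u b + 1"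
    if "H_adj0 V es M a b" for a b
    using that unfolding H_adj0_def
  proof (elim disjE exE conjE bexE)
    fix w j assume "a = Short w j" "b = Short w (Suc j)"
    then show ?thesis by (simp add: potential_def)
  next
    fix i k assume "i < length es" "k < M" "a = long_node es M i k" "b = long_node es M i (Suc k)"
    then show ?thesis
      using potential_long_node[OF assms(1-3), of i k] potential_long_node[OF assms(1-3), of i "Suc k"]
      by (auto simp add: min_def)
  qed
  then show ?thesis using assms(4) unfolding H_adj_def by blast
qed

lemma psi_distortion:
  assumes "simple_graph_enum V es" "connected_graph V es" "M \<ge> 1" "i0 < length es"
    and "u \<in> V" "v \<in> V"
  shows "M * gdist (gadj es) u v \<le> gdist (H_adj V es M) (Short u i0) (Short v i0)"
    and "gdist (H_adj V es M) (Short u i0) (Short v i0) \<le> (2 * length es + M) * gdist (gadj es) u v"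
proof -
  let ?psi = "\<lambda>w. Short w i0"
  obtain n where G_walk: "walk (gadj es) u v n"
    using assms(2,5,6) unfolding connected_graph_def by blast
  have simulate: "\<exists>L \<le> 2 * length es + M. walk (H_adj V es M) (?psi a) (?psi b) L"
    if "gadj es a b" for a b
    using edge_simulation[OF assms(1,3,4) that] .
  show "gdist (H_adj V es M) (?psi u) (?psi v) \<le> (2 * length es + M) * gdist (gadj es) u v"
    using gdist_transfer[OF simulate G_walk] .
  obtain L where H_walk: "walk (H_adj V es M) (?psi u) (?psi v) L"
    using walk_transfer[of "gadj es" _ "H_adj V es M" ?psi, OF simulate G_walk] by blast
  have "potential es M u (?psi v) \<le> potential es M u (?psi u) + gdist (H_adj V es M) (?psi u) (?psi v)"
    using gdist_potential[OF potential_lipschitz[OF assms(1,2,5)] H_walk] .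
  then show "M * gdist (gadj es) u v \<le> gdist (H_adj V es M) (?psi u) (?psi v)"
    by (simp add: potential_def gdist_refl)
qed

theorem mainTheorem4:
  fixes V :: "'a set" and es :: "('a \<times> 'a) list" and M i0 :: nat
  assumes "simple_graph_enum V es" and "connected_graph V es"
    and "length es \<ge> 1" and "M \<ge> 1" and "i0 < length es"
  shows "(\<forall>x \<in> H_verts V es M. finite {y. H_adj V es M x y} \<and> card {y. H_adj V es M x y} \<le> 3)
    \<and> (\<forall>u\<in>V. \<forall>v\<in>V.
         M * gdist (gadj es) u v \<le> gdist (H_adj V es M) (Short u i0) (Short v i0)
       \<and> gdist (H_adj V es M) (Short u i0) (Short v i0) \<le> (2 * length es + M) * gdist (gadj es) u v)"
  using H_max_degree[OF assms(1)] psi_distortion[OF assms(1,2,4,5)] by blast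

end
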